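(* Let $(X_i,W_i,Y_i)$, $i=1,\dots,n$, be independently distributed observations from a regression discontinuity design with cutoff $c$, as described in the context. Assume: (A1) $\mu_0(x)$ and $\mu_1(x)$ are continuous at every $x$; (A2) $p(x)$ is continuous at every $x\neq c$; at the cutoff the right and left limits of $p$ exist and are finite, and $\lim_{x\to c^+}p(x)=p(c)\neq\lim_{x\to c^-}p(x)$; (A3) the function $C(x)=\mathbb{E}[(\epsilon_i(1)-\epsilon_i(0))\epsilon_i\mid X_i=x]$ is continuous at every $x\neq c$; at the cutoff its right and left limits exist and are finite, and $\lim_{x\to c^+}C(x)=C(c)$. Then there exist a constant $\beta$ and a continuous function $f$ such that $$Y_i=\tau_c\,p(X_i)+\beta\,\mathbf{1}(X_i\ge c)+f(X_i)+\varepsilon_i,$$ where $\varepsilon_i$ is uncorrelated with $X_i$, has expectation $0$ and variance $\sigma_i^2$. In particular, in the sharp RDD (where $W_i=\mathbf{1}(X_i\ge c)$) this representation holds with $p(X_i)=\mathbf{1}(X_i\ge c)$ and $\beta=0$.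
   Context: Each unit $i$ has potential outcomes $(Y_i(0),Y_i(1))$, a received treatment $W_i\in\{0,1\}$, observed outcome $Y_i=Y_i(W_i)$, and a real-valued running variable $X_i$; $c$ is a fixed cutoff. Define $\mu_1(x)=\mathbb{E}[Y_i(1)\mid X_i=x]$, $\mu_0(x)=\mathbb{E}[Y_i(0)\mid X_i=x]$, $p(x)=\mathbb{E}[W_i\mid X_i=x]=\mathbb{P}(W_i=1\mid X_i=x)$ (the propensity score), and deviations $\epsilon_i(0)=Y_i(0)-\mu_0(X_i)$, $\epsilon_i(1)=Y_i(1)-\mu_1(X_i)$, $\epsilon_i=W_i-p(X_i)$. The average treatment effect at the cutoff is $\tau_c=\mu_1(c)-\mu_0(c)$. $X_i$ is not assumed independent of $(\epsilon_i(0),\epsilon_i(1),\epsilon_i)$. The design is called sharp if $W_i=\mathbf{1}(X_i\ge c)$ and fuzzy otherwise. *)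

theory Defs
  imports "HOL-Probability.Probability"
begin

text \<open>m is (a version of) the regression function x \<mapsto> E[Z | X = x]:
  m is Borel, m(X) is integrable, and for every Borel set A,
  E[Z 1(X \<in> A)] = E[m(X) 1(X \<in> A)]  (Kolmogorov's defining property).\<close>
definition cond_mean_fun :: "'a measure \<Rightarrow> ('a \<Rightarrow> real) \<Rightarrow> ('a \<Rightarrow> real) \<Rightarrow> (real \<Rightarrow> real) \<Rightarrow> bool" where
  "cond_mean_fun M X Z m \<longleftrightarrow>
     m \<in> borel_measurable borel \<and> integrable M (\<lambda>\<omega>. m (X \<omega>)) \<and>
     (\<forall>A\<in>sets borel. (\<integral>\<omega>. indicator A (X \<omega>) * Z \<omega> \<partial>M) = (\<integral>\<omega>. indicator A (X \<omega>) * m (X \<omega>) \<partial>M))"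

definition rdd_repr :: "'a measure \<Rightarrow> (nat \<Rightarrow> 'a \<Rightarrow> real) \<Rightarrow> (nat \<Rightarrow> 'a \<Rightarrow> real) \<Rightarrow> nat \<Rightarrow> real
     \<Rightarrow> real \<Rightarrow> (real \<Rightarrow> real) \<Rightarrow> real \<Rightarrow> (real \<Rightarrow> real) \<Rightarrow> bool" where
  "rdd_repr M X Y n c tau q beta f \<longleftrightarrow>
     continuous_on UNIV f \<and>
     (\<forall>i<n. let e = (\<lambda>\<omega>. Y i \<omega> - (tau * q (X i \<omega>) + beta * (if X i \<omega> \<ge> c then 1 else 0) + f (X i \<omega>)))
       in integrable M e \<and> integrable M (\<lambda>\<omega>. (e \<omega>)\<^sup>2) \<and>
          (\<integral>\<omega>. e \<omega> \<partial>M) = 0 \<and>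
          integrable M (\<lambda>\<omega>. e \<omega> * X i \<omega>) \<and>
          (\<integral>\<omega>. (e \<omega> - (\<integral>\<omega>'. e \<omega>' \<partial>M)) * (X i \<omega> - (\<integral>\<omega>'. X i \<omega>' \<partial>M)) \<partial>M) = 0)"

end

theory Submission
  imports Defs
begin

text \<open>
  Write Y = Y0 + W (Y1 - Y0) and split Y1 - Y0 into (mu1 - mu0)(X) and the noise difference
  e1 - e0, whose conditional mean given X is zero. Since
  W (e1 - e0) = (W - p(X)) (e1 - e0) + p(X) (e1 - e0), pulling functions of X out of conditional
  expectations gives E[Y | X] = g(X) with g = mu0 + p (mu1 - mu0) + C.
  With tau = mu1(c) - mu0(c) and beta the jump of C at c, the remainder
  f = g - tau p - beta 1(. >= c) is continuous: the jump of p is multiplied by mu1 - mu0 - tau,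
  which vanishes at c. The residual Y - g(X) has conditional mean zero given X, hence mean zero and
  zero covariance with X. In the sharp design W = 1(X >= c) is itself a function of X, and the same
  computation gives g = mu0 + 1(. >= c) (mu1 - mu0).
\<close>

definition square_integrable :: "'a measure \<Rightarrow> ('a \<Rightarrow> real) \<Rightarrow> bool" where
  "square_integrable M f \<longleftrightarrow> f \<in> borel_measurable M \<and> integrable M (\<lambda>x. (f x)\<^sup>2)"

lemma square_integrable_measurable [measurable_dest]:
  "square_integrable M f \<Longrightarrow> f \<in> borel_measurable M"
  by (simp add: square_integrable_def)

lemma integrable_mult_square_integrable:
  assumes "square_integrable M f" "square_integrable M g"
  shows "integrable M (\<lambda>x. f x * g x)"
proof (rule Bochner_Integration.integrable_bound)
  show "integrable M (\<lambda>x. (f x)\<^sup>2 + (g x)\<^sup>2)"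
    using assms by (simp add: square_integrable_def)
  have "\<bar>a * b\<bar> \<le> a\<^sup>2 + b\<^sup>2" for a b :: real
  proof -
    have "2 * (\<bar>a\<bar> * \<bar>b\<bar>) \<le> a\<^sup>2 + b\<^sup>2"
      using sum_squares_bound[of "\<bar>a\<bar>" "\<bar>b\<bar>"] by (simp add: mult.assoc)
    moreover have "0 \<le> \<bar>a\<bar> * \<bar>b\<bar>" by simp
    ultimately show ?thesis unfolding abs_mult by linarith
  qed
  then show "AE x in M. norm (f x * g x) \<le> norm ((f x)\<^sup>2 + (g x)\<^sup>2)"
    by simp
qed (use assms in measurable)

lemma square_integrable_add:
  assumes "square_integrable M f" "square_integrable M g"
  shows "square_integrable M (\<lambda>x. f x + g x)"
proof -
  have "(\<lambda>x. (f x + g x)\<^sup>2) = (\<lambda>x. (f x)\<^sup>2 + (g x)\<^sup>2 + 2 * (f x * g x))"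
    by (simp add: power2_sum mult.assoc)
  then show ?thesis
    using assms integrable_mult_square_integrable[OF assms]
    by (auto simp: square_integrable_def)
qed

lemma square_integrable_uminus:
  "square_integrable M f \<Longrightarrow> square_integrable M (\<lambda>x. - f x)"
  by (simp add: square_integrable_def)

lemma square_integrable_diff:
  assumes "square_integrable M f" "square_integrable M g"
  shows "square_integrable M (\<lambda>x. f x - g x)"
  using square_integrable_add[OF assms(1) square_integrable_uminus[OF assms(2)]] by simp

lemma (in finite_measure) square_integrable_bounded:
  assumes "f \<in> borel_measurable M" "\<And>x. x \<in> space M \<Longrightarrow> \<bar>f x\<bar> \<le> B"
  shows "square_integrable M f"
  unfolding square_integrable_def
proof (intro conjI integrable_const_bound[where B = "B\<^sup>2"] AE_I2)
  fix x assume "x \<in> space M"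
  then show "norm ((f x)\<^sup>2) \<le> B\<^sup>2"
    using power_mono[OF assms(2) abs_ge_zero, of x 2] by (simp only: power2_abs real_norm_def abs_power2)
qed (use assms in measurable)

lemma (in finite_measure) square_integrable_integrable:
  "square_integrable M f \<Longrightarrow> integrable M f"
  by (simp add: square_integrable_def square_integrable_imp_integrable)

lemma square_integrable_If:
  assumes "square_integrable M Y0" "square_integrable M Y1" "Measurable.pred M B"
    and "\<And>w. w \<in> space M \<Longrightarrow> Y w = (if B w then Y1 w else Y0 w)"
  shows "square_integrable M Y"
proof -
  have "(\<lambda>w. if B w then Y1 w else Y0 w) \<in> borel_measurable M"
    using assms(1-3) by measurable
  then have [measurable]: "Y \<in> borel_measurable M"
    using assms(4) by (simp cong: measurable_cong)
  have "integrable M (\<lambda>w. (Y w)\<^sup>2)"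
  proof (rule Bochner_Integration.integrable_bound)
    show "integrable M (\<lambda>w. (Y0 w)\<^sup>2 + (Y1 w)\<^sup>2)"
      using assms(1,2) by (simp add: square_integrable_def)
    show "AE w in M. norm ((Y w)\<^sup>2) \<le> norm ((Y0 w)\<^sup>2 + (Y1 w)\<^sup>2)"
      using assms(4) by (intro AE_I2) simp
  qed measurable
  then show ?thesis
    by (simp add: square_integrable_def)
qed

lemma set_integral_vimage:
  fixes f :: "'a \<Rightarrow> real"
  shows "(\<integral>w\<in>X -` A \<inter> space M. f w \<partial>M) = (\<integral>w. indicator A (X w) * f w \<partial>M)"
  unfolding set_lebesgue_integral_def
  by (intro Bochner_Integration.integral_cong) (auto simp: indicator_def)

lemma cond_mean_fun_comp:
  "h \<in> borel_measurable borel \<Longrightarrow> integrable M (\<lambda>w. h (X w)) \<Longrightarrow> cond_mean_fun M X (\<lambda>w. h (X w)) h"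
  by (simp add: cond_mean_fun_def)

lemma cond_mean_fun_cong:
  assumes "\<And>w. w \<in> space M \<Longrightarrow> Z w = Z' w" "cond_mean_fun M X Z m"
  shows "cond_mean_fun M X Z' m"
proof -
  have "(\<integral>w. indicator A (X w) * Z w \<partial>M) = (\<integral>w. indicator A (X w) * Z' w \<partial>M)" for A
    using assms(1) by (intro Bochner_Integration.integral_cong) simp_all
  then show ?thesis
    using assms(2) by (simp add: cond_mean_fun_def)
qed

lemma cond_mean_fun_integral:
  "cond_mean_fun M X Z m \<Longrightarrow> (\<integral>w. Z w \<partial>M) = (\<integral>w. m (X w) \<partial>M)"
  unfolding cond_mean_fun_def by (auto dest!: bspec[of _ _ UNIV])

lemma integral_centered_mult_eq_zero:
  fixes e x :: "'a \<Rightarrow> real"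
  assumes "integrable M e" "integrable M (\<lambda>w. e w * x w)"
    and "(\<integral>w. e w \<partial>M) = 0" "(\<integral>w. e w * x w \<partial>M) = 0"
  shows "(\<integral>w. (e w - (\<integral>w'. e w' \<partial>M)) * (x w - (\<integral>w'. x w' \<partial>M)) \<partial>M) = 0"
proof -
  have "(\<lambda>w. (e w - (\<integral>w'. e w' \<partial>M)) * (x w - (\<integral>w'. x w' \<partial>M)))
      = (\<lambda>w. e w * x w - (\<integral>w'. x w' \<partial>M) * e w)"
    using assms(3) by (simp add: algebra_simps)
  then show ?thesis
    using assms by simp
qed

lemma isCont_cutoff_indicator:
  fixes c x :: real
  assumes "x \<noteq> c"
  shows "isCont (\<lambda>y. if y \<ge> c then 1 else 0 :: real) x"
proof -
  have "eventually (\<lambda>y. (if y \<ge> c then 1 else 0 :: real) = (if x \<ge> c then 1 else 0)) (at x)"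
  proof (cases "x < c")
    case True
    show ?thesis
      using order_tendstoD(2)[OF tendsto_ident_at True] by (rule eventually_mono) (use True in auto)
  next
    case False
    with assms have "c < x" by simp
    show ?thesis
      using order_tendstoD(1)[OF tendsto_ident_at \<open>c < x\<close>] by (rule eventually_mono) (use False in auto)
  qed
  then show ?thesis
    unfolding isCont_def by (rule tendsto_eventually)
qed

lemma tendsto_cutoff_indicator:
  fixes c :: real
  shows "((\<lambda>x. if x \<ge> c then 1 else 0 :: real) \<longlongrightarrow> 0) (at_left c)"
    and "((\<lambda>x. if x \<ge> c then 1 else 0 :: real) \<longlongrightarrow> 1) (at_right c)"
  by (auto intro!: tendsto_eventually simp: eventually_at_filter)

lemma continuous_on_subtract_jump:
  fixes h :: "real \<Rightarrow> real"
  assumes cont: "\<And>x. x \<noteq> c \<Longrightarrow> isCont h x"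
    and left: "(h \<longlongrightarrow> l) (at_left c)" and right: "(h \<longlongrightarrow> h c) (at_right c)"
  shows "continuous_on UNIV (\<lambda>x. h x - (h c - l) * (if x \<ge> c then 1 else 0))"
    (is "continuous_on UNIV ?f")
proof -
  have "isCont ?f x" for x
  proof (cases "x = c")
    case True
    have "eventually (\<lambda>y. ?f y = h y) (at_left c)"
      by (simp add: eventually_at_filter)
    then have "(?f \<longlongrightarrow> l) (at_left c)"
      using left by (simp only: tendsto_cong)
    moreover have "eventually (\<lambda>y. ?f y = h y - (h c - l)) (at_right c)"
      by (simp add: eventually_at_filter)
    then have "(?f \<longlongrightarrow> h c - (h c - l)) (at_right c)"
      using tendsto_diff[OF right tendsto_const] by (simp only: tendsto_cong)
    ultimately have "(?f \<longlongrightarrow> ?f c) (at_left c)" "(?f \<longlongrightarrow> ?f c) (at_right c)"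
      by simp_all
    then show ?thesis
      unfolding True isCont_def by (rule filterlim_split_at)
  next
    case False
    then show ?thesis
      by (intro continuous_intros cont isCont_cutoff_indicator)
  qed
  then show ?thesis
    by (simp add: continuous_on_eq_continuous_at)
qed

lemma continuous_on_rdd_remainder:
  fixes mu0 mu1 q C :: "real \<Rightarrow> real"
  assumes mu: "\<And>x. isCont mu0 x" "\<And>x. isCont mu1 x"
    and q: "\<And>x. x \<noteq> c \<Longrightarrow> isCont q x" "(q \<longlongrightarrow> ql) (at_left c)" "(q \<longlongrightarrow> q c) (at_right c)"
    and C: "\<And>x. x \<noteq> c \<Longrightarrow> isCont C x" "(C \<longlongrightarrow> Cl) (at_left c)" "(C \<longlongrightarrow> C c) (at_right c)"
  shows "continuous_on UNIV (\<lambda>x. mu0 x + q x * (mu1 x - mu0 x) + C x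
            - (mu1 c - mu0 c) * q x - (C c - Cl) * (if x \<ge> c then 1 else 0))"
proof -
  define h where "h = (\<lambda>x. mu0 x + q x * (mu1 x - mu0 x - (mu1 c - mu0 c)) + C x)"
  have mu_lr: "(mu0 \<longlongrightarrow> mu0 c) (at_left c)" "(mu1 \<longlongrightarrow> mu1 c) (at_left c)"
    "(mu0 \<longlongrightarrow> mu0 c) (at_right c)" "(mu1 \<longlongrightarrow> mu1 c) (at_right c)"
    using mu(1)[of c] mu(2)[of c] unfolding isCont_def filterlim_at_split by simp_all
  have "(h \<longlongrightarrow> mu0 c + ql * (mu1 c - mu0 c - (mu1 c - mu0 c)) + Cl) (at_left c)"
    unfolding h_def by (intro tendsto_intros mu_lr q C)
  then have "(h \<longlongrightarrow> mu0 c + Cl) (at_left c)"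
    by simp
  moreover have "(h \<longlongrightarrow> h c) (at_right c)"
    unfolding h_def by (intro tendsto_intros mu_lr q C)
  ultimately have "continuous_on UNIV (\<lambda>x. h x - (h c - (mu0 c + Cl)) * (if x \<ge> c then 1 else 0))"
    using mu q C by (intro continuous_on_subtract_jump) (auto simp: h_def intro!: continuous_intros)
  then show ?thesis
    by (simp add: h_def algebra_simps)
qed

context prob_space
begin

context
  fixes X :: "'a \<Rightarrow> real"
  assumes X_measurable [measurable]: "X \<in> borel_measurable M"
begin

lemma finite_measure_subalgebra_vimage:
  "finite_measure_subalgebra M (vimage_algebra (space M) X borel)"
proof -
  have "subalgebra M (vimage_algebra (space M) X borel)"
    unfolding subalgebra_def using sets_image_in_sets[of M "space M" X borel] by auto
  then show ?thesis
    by (simp add: finite_measure_subalgebra_def finite_measure_subalgebra_axioms_def finite_measure_axioms)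
qed

interpretation sigma_X: finite_measure_subalgebra M "vimage_algebra (space M) X borel"
  by (rule finite_measure_subalgebra_vimage)

lemma measurable_comp_vimage_algebra:
  "h \<in> borel_measurable borel \<Longrightarrow> (\<lambda>w. h (X w)) \<in> borel_measurable (vimage_algebra (space M) X borel)"
  using measurable_compose[OF measurable_vimage_algebra1[of X "space M" borel]] by auto

lemma cond_mean_fun_iff_AE_real_cond_exp:
  assumes "integrable M Z"
  shows "cond_mean_fun M X Z m \<longleftrightarrow> m \<in> borel_measurable borel \<and>
    (AE w in M. real_cond_exp M (vimage_algebra (space M) X borel) Z w = m (X w))"
proof -
  let ?F = "vimage_algebra (space M) X borel"
  have [measurable]: "Z \<in> borel_measurable M"
    using assms by (rule borel_measurable_integrable)
  show ?thesis
  proof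
    assume m: "cond_mean_fun M X Z m"
    then have [measurable]: "m \<in> borel_measurable borel"
      by (simp add: cond_mean_fun_def)
    have "AE w in M. real_cond_exp M ?F Z w = m (X w)"
    proof (rule sigma_X.real_cond_exp_charact)
      fix A assume "A \<in> sets ?F"
      then obtain B where "B \<in> sets borel" "A = X -` B \<inter> space M"
        using sets_vimage_algebra2[of X "space M" borel] by auto
      then show "(\<integral>w\<in>A. Z w \<partial>M) = (\<integral>w\<in>A. m (X w) \<partial>M)"
        using m by (simp add: cond_mean_fun_def set_integral_vimage)
    qed (use m assms in \<open>simp_all add: cond_mean_fun_def measurable_comp_vimage_algebra\<close>)
    then show "m \<in> borel_measurable borel \<and> (AE w in M. real_cond_exp M ?F Z w = m (X w))"
      by simp
  next
    assume m: "m \<in> borel_measurable borel \<and> (AE w in M. real_cond_exp M ?F Z w = m (X w))"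
    then have [measurable]: "m \<in> borel_measurable borel" by simp
    have "integrable M (\<lambda>w. m (X w))"
      using sigma_X.real_cond_exp_int(1)[OF assms] m by (subst integrable_cong_AE[symmetric]) auto
    moreover have "(\<integral>w. indicator A (X w) * Z w \<partial>M) = (\<integral>w. indicator A (X w) * m (X w) \<partial>M)"
      if "A \<in> sets borel" for A
    proof -
      have [measurable]: "A \<in> sets borel" by fact
      have "(\<integral>w. indicator A (X w) * Z w \<partial>M) = (\<integral>w. indicator A (X w) * real_cond_exp M ?F Z w \<partial>M)"
        by (rule sigma_X.real_cond_exp_intg(2)[symmetric])
          (auto intro!: Bochner_Integration.integrable_bound[OF assms] measurable_comp_vimage_algebra
            split: split_indicator)
      also have "\<dots> = (\<integral>w. indicator A (X w) * m (X w) \<partial>M)"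
        using m by (intro integral_cong_AE) auto
      finally show ?thesis .
    qed
    ultimately show "cond_mean_fun M X Z m"
      by (simp add: cond_mean_fun_def)
  qed
qed

lemma cond_mean_fun_add:
  assumes "integrable M Z1" "integrable M Z2" "cond_mean_fun M X Z1 m1" "cond_mean_fun M X Z2 m2"
  shows "cond_mean_fun M X (\<lambda>w. Z1 w + Z2 w) (\<lambda>x. m1 x + m2 x)"
  using sigma_X.real_cond_exp_add[OF assms(1,2)] assms
  by (auto simp: cond_mean_fun_iff_AE_real_cond_exp elim!: AE_mp)

lemma cond_mean_fun_diff:
  assumes "integrable M Z1" "integrable M Z2" "cond_mean_fun M X Z1 m1" "cond_mean_fun M X Z2 m2"
  shows "cond_mean_fun M X (\<lambda>w. Z1 w - Z2 w) (\<lambda>x. m1 x - m2 x)"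
  using sigma_X.real_cond_exp_diff[OF assms(1,2)] assms
  by (auto simp: cond_mean_fun_iff_AE_real_cond_exp simp del: sigma_X.real_cond_exp_diff
      elim!: AE_mp)

lemma cond_mean_fun_mult:
  assumes "h \<in> borel_measurable borel" "integrable M Z" "integrable M (\<lambda>w. h (X w) * Z w)"
    and "cond_mean_fun M X Z m"
  shows "cond_mean_fun M X (\<lambda>w. h (X w) * Z w) (\<lambda>x. h x * m x)"
  using sigma_X.real_cond_exp_mult[OF measurable_comp_vimage_algebra[OF assms(1)]
      borel_measurable_integrable[OF assms(2)] assms(3)] assms
  by (auto simp: cond_mean_fun_iff_AE_real_cond_exp elim!: AE_mp)

lemma square_integrable_cond_mean_fun:
  assumes "square_integrable M Z" "cond_mean_fun M X Z m"
  shows "square_integrable M (\<lambda>w. m (X w))"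
proof -
  let ?E = "real_cond_exp M (vimage_algebra (space M) X borel) Z"
  have Z: "integrable M Z" "integrable M (\<lambda>w. (Z w)\<^sup>2)"
    using assms(1) by (auto simp: square_integrable_def square_integrable_imp_integrable)
  then have "m \<in> borel_measurable borel" and AE: "AE w in M. ?E w = m (X w)"
    using assms(2) by (simp_all add: cond_mean_fun_iff_AE_real_cond_exp)
  have "integrable M (\<lambda>w. (?E w)\<^sup>2)"
    by (rule sigma_X.integrable_convex_cond_exp[where I = UNIV and a = 0 and b = 0])
      (use Z convex_power2 in auto)
  then show ?thesis
    using AE \<open>m \<in> borel_measurable borel\<close> unfolding square_integrable_def
    by (subst (asm) integrable_cong_AE) auto
qed

lemma cond_mean_fun_centered:
  assumes Z: "square_integrable M Z" and m: "cond_mean_fun M X Z m"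
  shows "cond_mean_fun M X (\<lambda>w. Z w - m (X w)) (\<lambda>_. 0)"
proof -
  have "m \<in> borel_measurable borel"
    using m by (simp add: cond_mean_fun_def)
  then have "cond_mean_fun M X (\<lambda>w. Z w - m (X w)) (\<lambda>x. m x - m x)"
    using Z m square_integrable_cond_mean_fun[OF Z m]
    by (intro cond_mean_fun_diff cond_mean_fun_comp square_integrable_integrable)
  then show ?thesis
    by simp
qed

lemma cond_mean_fun_residual:
  assumes X: "square_integrable M X" and Y: "square_integrable M Y" and g: "cond_mean_fun M X Y g"
  shows "square_integrable M (\<lambda>w. Y w - g (X w))"
    and "(\<integral>w. Y w - g (X w) \<partial>M) = 0"
    and "integrable M (\<lambda>w. (Y w - g (X w)) * X w)"
    and "(\<integral>w. (Y w - g (X w)) * X w \<partial>M) = 0"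
proof -
  let ?e = "\<lambda>w. Y w - g (X w)"
  have gX: "square_integrable M (\<lambda>w. g (X w))"
    by (rule square_integrable_cond_mean_fun[OF Y g])
  show e: "square_integrable M ?e"
    by (rule square_integrable_diff[OF Y gX])
  show eX: "integrable M (\<lambda>w. ?e w * X w)"
    by (rule integrable_mult_square_integrable[OF e X])
  have e0: "cond_mean_fun M X ?e (\<lambda>_. 0)"
    by (rule cond_mean_fun_centered[OF Y g])
  then show "(\<integral>w. ?e w \<partial>M) = 0"
    by (simp add: cond_mean_fun_integral)
  have Xe: "integrable M (\<lambda>w. X w * ?e w)"
    using eX by (simp add: mult.commute)
  have "cond_mean_fun M X (\<lambda>w. X w * ?e w) (\<lambda>x. x * 0)"
    by (rule cond_mean_fun_mult[where h = "\<lambda>x. x", OF _ square_integrable_integrable[OF e] Xe e0])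
      simp
  then show "(\<integral>w. ?e w * X w \<partial>M) = 0"
    by (simp add: cond_mean_fun_integral mult.commute)
qed

lemma cond_mean_fun_observed_outcome:
  assumes W: "W \<in> borel_measurable M" "\<And>w. w \<in> space M \<Longrightarrow> W w = 0 \<or> W w = 1"
    and Y: "\<And>w. w \<in> space M \<Longrightarrow> Y w = (if W w = 1 then Y1 w else Y0 w)"
    and Y0: "square_integrable M Y0" and Y1: "square_integrable M Y1"
    and mu0: "cond_mean_fun M X Y0 mu0" and mu1: "cond_mean_fun M X Y1 mu1"
    and p: "cond_mean_fun M X W p"
    and C: "cond_mean_fun M X (\<lambda>w. ((Y1 w - mu1 (X w)) - (Y0 w - mu0 (X w))) * (W w - p (X w))) C"
  shows "cond_mean_fun M X Y (\<lambda>x. mu0 x + p x * (mu1 x - mu0 x) + C x)"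
proof -
  define D where "D = (\<lambda>x. mu1 x - mu0 x)"
  define E where "E w = Y1 w - Y0 w - D (X w)" for w
  have W2: "square_integrable M W"
    using W by (intro square_integrable_bounded[where B = 1]) fastforce+
  have pX: "square_integrable M (\<lambda>w. p (X w))"
    by (rule square_integrable_cond_mean_fun[OF W2 p])
  note integrable = square_integrable_integrable integrable_mult_square_integrable
  have Y10: "square_integrable M (\<lambda>w. Y1 w - Y0 w)"
    by (rule square_integrable_diff[OF Y1 Y0])
  have D: "cond_mean_fun M X (\<lambda>w. Y1 w - Y0 w) D"
    using cond_mean_fun_diff[OF integrable(1)[OF Y1] integrable(1)[OF Y0] mu1 mu0]
    by (simp add: D_def)
  have DX: "square_integrable M (\<lambda>w. D (X w))"
    by (rule square_integrable_cond_mean_fun[OF Y10 D])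
  have E2: "square_integrable M E"
    unfolding E_def by (rule square_integrable_diff[OF Y10 DX])
  have E0: "cond_mean_fun M X E (\<lambda>_. 0)"
    unfolding E_def by (rule cond_mean_fun_centered[OF Y10 D])
  have "cond_mean_fun M X (\<lambda>w. D (X w) * W w) (\<lambda>x. D x * p x)"
    using D W2 DX p by (intro cond_mean_fun_mult integrable) (simp_all add: cond_mean_fun_def)
  moreover have "cond_mean_fun M X (\<lambda>w. p (X w) * E w) (\<lambda>x. p x * 0)"
    using p pX E2 E0 by (intro cond_mean_fun_mult integrable) (simp_all add: cond_mean_fun_def)
  moreover have "cond_mean_fun M X (\<lambda>w. E w * (W w - p (X w))) C"
    using C by (simp add: E_def D_def algebra_simps)
  ultimately have "cond_mean_fun M X (\<lambda>w. Y0 w + D (X w) * W w + p (X w) * E w + E w * (W w - p (X w)))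
      (\<lambda>x. mu0 x + D x * p x + p x * 0 + C x)"
    using integrable(1)[OF Y0] integrable(2)[OF DX W2] integrable(2)[OF pX E2]
      integrable(2)[OF E2 square_integrable_diff[OF W2 pX]] mu0
    by (intro cond_mean_fun_add Bochner_Integration.integrable_add)
  moreover have "Y0 w + D (X w) * W w + p (X w) * E w + E w * (W w - p (X w)) = Y w" if "w \<in> space M" for w
    using W(2)[OF that] Y[OF that] by (auto simp: E_def D_def algebra_simps)
  ultimately have "cond_mean_fun M X Y (\<lambda>x. mu0 x + D x * p x + p x * 0 + C x)"
    by (rule cond_mean_fun_cong[rotated])
  then show ?thesis
    by (simp add: D_def algebra_simps)
qed

lemma cond_mean_fun_observed_outcome_sharp:
  assumes Y: "\<And>w. w \<in> space M \<Longrightarrow> Y w = (if X w \<ge> c then Y1 w else Y0 w)"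
    and Y0: "square_integrable M Y0" and Y1: "square_integrable M Y1"
    and mu0: "cond_mean_fun M X Y0 mu0" and mu1: "cond_mean_fun M X Y1 mu1"
  shows "cond_mean_fun M X Y (\<lambda>x. mu0 x + (if x \<ge> c then 1 else 0) * (mu1 x - mu0 x))"
proof -
  note integrable = square_integrable_integrable integrable_mult_square_integrable
  have I2: "square_integrable M (\<lambda>w. if X w \<ge> c then 1 else 0)"
    by (intro square_integrable_bounded[where B = 1]) auto
  have "cond_mean_fun M X (\<lambda>w. Y1 w - Y0 w) (\<lambda>x. mu1 x - mu0 x)"
    using Y0 Y1 mu0 mu1 by (intro cond_mean_fun_diff integrable)
  then have "cond_mean_fun M X (\<lambda>w. (if X w \<ge> c then 1 else 0) * (Y1 w - Y0 w))
      (\<lambda>x. (if x \<ge> c then 1 else 0) * (mu1 x - mu0 x))"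
    using I2 Y0 Y1 by (intro cond_mean_fun_mult integrable square_integrable_diff) auto
  then have "cond_mean_fun M X (\<lambda>w. Y0 w + (if X w \<ge> c then 1 else 0) * (Y1 w - Y0 w))
      (\<lambda>x. mu0 x + (if x \<ge> c then 1 else 0) * (mu1 x - mu0 x))"
    using I2 Y0 Y1 mu0 by (intro cond_mean_fun_add integrable square_integrable_diff)
  then show ?thesis
    by (rule cond_mean_fun_cong[rotated]) (simp add: Y)
qed

end

lemma rdd_repr_if_cond_mean_fun:
  assumes X: "\<And>i. i < n \<Longrightarrow> square_integrable M (X i)"
    and Y: "\<And>i. i < n \<Longrightarrow> square_integrable M (Y i)"
    and g: "\<And>i. i < n \<Longrightarrow> cond_mean_fun M (X i) (Y i) g"
    and g_eq: "\<And>x. g x = tau * q x + beta * (if x \<ge> c then 1 else 0) + f x"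
    and f: "continuous_on UNIV f"
  shows "rdd_repr M X Y n c tau q beta f"
proof -
  have "integrable M (\<lambda>w. Y i w - g (X i w)) \<and> integrable M (\<lambda>w. (Y i w - g (X i w))\<^sup>2)
      \<and> (\<integral>w. Y i w - g (X i w) \<partial>M) = 0 \<and> integrable M (\<lambda>w. (Y i w - g (X i w)) * X i w)
      \<and> (\<integral>w. (Y i w - g (X i w) - (\<integral>w'. Y i w' - g (X i w') \<partial>M)) * (X i w - (\<integral>w'. X i w' \<partial>M)) \<partial>M) = 0"
    if "i < n" for i
  proof -
    note R = cond_mean_fun_residual[OF square_integrable_measurable[OF X] X Y g, OF that that that that]
    have "integrable M (\<lambda>w. Y i w - g (X i w))"
      by (rule square_integrable_integrable[OF R(1)])
    with integral_centered_mult_eq_zero[OF this R(3) R(2) R(4)] show ?thesis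
      using R by (simp add: square_integrable_def)
  qed
  then show ?thesis
    using f unfolding rdd_repr_def Let_def g_eq[symmetric] by blast
qed

lemma ex_rdd_repr_of_cond_mean_fun:
  assumes X: "\<And>i. i < n \<Longrightarrow> square_integrable M (X i)"
    and Y: "\<And>i. i < n \<Longrightarrow> square_integrable M (Y i)"
    and g: "\<And>i. i < n \<Longrightarrow> cond_mean_fun M (X i) (Y i) g"
    and g_eq: "\<And>x. g x = mu0 x + q x * (mu1 x - mu0 x) + C x"
    and mu: "\<And>x. isCont mu0 x" "\<And>x. isCont mu1 x"
    and q: "\<And>x. x \<noteq> c \<Longrightarrow> isCont q x" "(q \<longlongrightarrow> ql) (at_left c)" "(q \<longlongrightarrow> q c) (at_right c)"
    and C: "\<And>x. x \<noteq> c \<Longrightarrow> isCont C x" "(C \<longlongrightarrow> Cl) (at_left c)" "(C \<longlongrightarrow> C c) (at_right c)"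
  shows "\<exists>f. rdd_repr M X Y n c (mu1 c - mu0 c) q (C c - Cl) f"
  by (rule exI, rule rdd_repr_if_cond_mean_fun[OF X Y g _ continuous_on_rdd_remainder[OF mu q C]])
    (use g_eq in auto)

end

theorem theorem1:
  fixes M :: "'a measure" and n :: nat and c :: real
    and X W Y0 Y1 Y :: "nat \<Rightarrow> 'a \<Rightarrow> real"
    and mu0 mu1 p C :: "real \<Rightarrow> real"
  assumes P: "prob_space M"
    and indep: "prob_space.indep_vars M (\<lambda>_. borel) (\<lambda>i \<omega>. (X i \<omega>, W i \<omega>, Y i \<omega>)) {..<n}"
    and meas: "\<And>i. i < n \<Longrightarrow> X i \<in> borel_measurable M \<and> W i \<in> borel_measurable M
                  \<and> Y0 i \<in> borel_measurable M \<and> Y1 i \<in> borel_measurable M"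
    and binW: "\<And>i \<omega>. i < n \<Longrightarrow> \<omega> \<in> space M \<Longrightarrow> W i \<omega> = 0 \<or> W i \<omega> = 1"
    and obsY: "\<And>i \<omega>. i < n \<Longrightarrow> \<omega> \<in> space M \<Longrightarrow> Y i \<omega> = (if W i \<omega> = 1 then Y1 i \<omega> else Y0 i \<omega>)"
    and L2: "\<And>i. i < n \<Longrightarrow> integrable M (\<lambda>\<omega>. (X i \<omega>)\<^sup>2) \<and> integrable M (\<lambda>\<omega>. (Y0 i \<omega>)\<^sup>2)
                  \<and> integrable M (\<lambda>\<omega>. (Y1 i \<omega>)\<^sup>2)"
    and mu0_def: "\<And>i. i < n \<Longrightarrow> cond_mean_fun M (X i) (Y0 i) mu0"
    and mu1_def: "\<And>i. i < n \<Longrightarrow> cond_mean_fun M (X i) (Y1 i) mu1"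
    and p_def: "\<And>i. i < n \<Longrightarrow> cond_mean_fun M (X i) (W i) p"
    and C_def: "\<And>i. i < n \<Longrightarrow> cond_mean_fun M (X i)
                  (\<lambda>\<omega>. ((Y1 i \<omega> - mu1 (X i \<omega>)) - (Y0 i \<omega> - mu0 (X i \<omega>))) * (W i \<omega> - p (X i \<omega>))) C"
    and A1: "\<And>x. isCont mu0 x" "\<And>x. isCont mu1 x"
    and A2: "\<And>x. x \<noteq> c \<Longrightarrow> isCont p x" "\<exists>pl. (p \<longlongrightarrow> pl) (at_left c) \<and> pl \<noteq> p c"
            "(p \<longlongrightarrow> p c) (at_right c)"
    and A3: "\<And>x. x \<noteq> c \<Longrightarrow> isCont C x" "\<exists>Cl. (C \<longlongrightarrow> Cl) (at_left c)"
            "(C \<longlongrightarrow> C c) (at_right c)"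
  shows "(\<exists>beta f. rdd_repr M X Y n c (mu1 c - mu0 c) p beta f)
       \<and> ((\<forall>i<n. \<forall>\<omega>\<in>space M. W i \<omega> = (if X i \<omega> \<ge> c then 1 else 0)) \<longrightarrow>
            (\<exists>f. rdd_repr M X Y n c (mu1 c - mu0 c) (\<lambda>x. if x \<ge> c then 1 else 0) 0 f))"
proof -
  interpret prob_space M by (rule P)
  have X: "square_integrable M (X i)" and Y0: "square_integrable M (Y0 i)"
    and Y1: "square_integrable M (Y1 i)" and W: "W i \<in> borel_measurable M" if "i < n" for i
    using meas[OF that] L2[OF that] by (simp_all add: square_integrable_def)
  have Y: "square_integrable M (Y i)" if "i < n" for i
    using W[OF that] by (intro square_integrable_If[OF Y0 Y1 _ obsY, OF that that _ that]) measurable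
  obtain pl where pl: "(p \<longlongrightarrow> pl) (at_left c)"
    using A2(2) by blast
  obtain Cl where Cl: "(C \<longlongrightarrow> Cl) (at_left c)"
    using A3(2) by blast
  have "\<exists>f. rdd_repr M X Y n c (mu1 c - mu0 c) p (C c - Cl) f"
    using cond_mean_fun_observed_outcome[OF square_integrable_measurable[OF X] W binW obsY Y0 Y1
        mu0_def mu1_def p_def C_def]
    by (intro ex_rdd_repr_of_cond_mean_fun[OF X Y _ _ A1 A2(1) pl A2(3) A3(1) Cl A3(3)]) simp_all
  moreover have "\<exists>f. rdd_repr M X Y n c (mu1 c - mu0 c) (\<lambda>x. if x \<ge> c then 1 else 0) 0 f"
    if sharp: "\<forall>i<n. \<forall>\<omega>\<in>space M. W i \<omega> = (if X i \<omega> \<ge> c then 1 else 0)"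
  proof -
    have "cond_mean_fun M (X i) (Y i) (\<lambda>x. mu0 x + (if x \<ge> c then 1 else 0) * (mu1 x - mu0 x))"
      if "i < n" for i
      using sharp obsY[OF that] that
      by (intro cond_mean_fun_observed_outcome_sharp[OF square_integrable_measurable[OF X] _ Y0 Y1
            mu0_def mu1_def]) auto
    from ex_rdd_repr_of_cond_mean_fun[where C = "\<lambda>_. 0" and Cl = 0, OF X Y this _ A1
        isCont_cutoff_indicator tendsto_cutoff_indicator(1)]
    show ?thesis
      using tendsto_cutoff_indicator(2) by simp
  qed
  ultimately show ?thesis
    by blast
qed

end
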